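(* Let $\mathcal{L}_2\subset\mathbb{P}^2_{\mathbb{R}}$ be the arrangement of $12$ lines defined by \begin{multline*} Q_2=xy(x-y)(x+y-z)(x-z)(y-z)\big(x+(1-\sqrt2)z\big)\big(y+(\sqrt2-2)z\big)\big(x+\sqrt2y+(1-\sqrt2)z\big)\\ \Big(x-\sqrt2z+\tfrac{\sqrt2}{2}y\Big)\big(x+(\sqrt2+1)y-\sqrt2z\big)\big(x+(\sqrt2-1)y+(2-2\sqrt2)z\big). \end{multline*} Then the real realization space of the matroid of $\mathcal{L}_2$ is zero-dimensional.
   Context: The matroid of a line arrangement $\{H_1,\dots,H_n\}\subset\mathbb{P}^2_{\mathbb{F}}$ is the rank-$3$ matroid on $[n]$ whose bases are the $3$-subsets $\{i,j,k\}$ with $H_i\cap H_j\cap H_k=\emptyset$ (equivalently, it encodes the intersection lattice). For a matroid $M$ realizable over $\mathbb{F}$, its realization space $\mathcal{R}(M;\mathbb{F})$ is the set of all arrangements of $n$ distinct lines in $\mathbb{P}^2_{\mathbb{F}}$ (with lines labeled by $[n]$) realizing $M$, modulo the action of $\mathrm{PGL}(3;\mathbb{F})$; its dimension is meant here. *)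

theory Defs
  imports "HOL-Analysis.Analysis"
begin

text \<open>A line a x + b y + c z = 0 in the real projective plane is represented by its
  nonzero coefficient vector (a,b,c) in real^3, determined up to a nonzero scalar.\<close>

definition line_arrangement :: "nat \<Rightarrow> (nat \<Rightarrow> real^3) \<Rightarrow> bool" where
  "line_arrangement n v \<longleftrightarrow>
     (\<forall>i<n. v i \<noteq> 0) \<and>
     (\<forall>i<n. \<forall>j<n. i \<noteq> j \<longrightarrow> \<not> (\<exists>c::real. v j = c *\<^sub>R v i))"

definition lines_meet_empty :: "real^3 \<Rightarrow> real^3 \<Rightarrow> real^3 \<Rightarrow> bool" where
  "lines_meet_empty a b c \<longleftrightarrow>
     \<not> (\<exists>p::real^3. p \<noteq> 0 \<and> p \<bullet> a = 0 \<and> p \<bullet> b = 0 \<and> p \<bullet> c = 0)"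

text \<open>The matroid of the arrangement, given by its set of bases (3-subsets of [n]).\<close>
definition arr_matroid :: "nat \<Rightarrow> (nat \<Rightarrow> real^3) \<Rightarrow> nat set set" where
  "arr_matroid n v = {{i, j, k} | i j k. i < n \<and> j < n \<and> k < n \<and>
       i \<noteq> j \<and> i \<noteq> k \<and> j \<noteq> k \<and> lines_meet_empty (v i) (v j) (v k)}"

definition realizations :: "nat set set \<Rightarrow> nat \<Rightarrow> (nat \<Rightarrow> real^3) set" where
  "realizations M n = {v. line_arrangement n v \<and> arr_matroid n v = M}"

text \<open>Two labelled arrangements are identified by PGL(3,R): an invertible linear
  map (acting on coefficient vectors) together with rescaling of each coefficient vector.\<close>
definition proj_equiv :: "nat \<Rightarrow> (nat \<Rightarrow> real^3) \<Rightarrow> (nat \<Rightarrow> real^3) \<Rightarrow> bool" where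
  "proj_equiv n v w \<longleftrightarrow>
     (\<exists>A::real^3^3. invertible A \<and>
        (\<forall>i<n. \<exists>c::real. c \<noteq> 0 \<and> w i = c *\<^sub>R (A *v v i)))"

definition realization_space :: "nat set set \<Rightarrow> nat \<Rightarrow> (nat \<Rightarrow> real^3) set set" where
  "realization_space M n =
     (\<lambda>v. {w \<in> realizations M n. proj_equiv n v w}) ` realizations M n"

text \<open>The arrangement L_2 (coefficients of the 12 linear forms, in the order of Q_2).\<close>
definition L2 :: "nat \<Rightarrow> real^3" where
  "L2 i = [vector [1, 0, 0],
           vector [0, 1, 0],
           vector [1, -1, 0],
           vector [1, 1, -1],
           vector [1, 0, -1],
           vector [0, 1, -1],
           vector [1, 0, 1 - sqrt 2],
           vector [0, 1, sqrt 2 - 2],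
           vector [1, sqrt 2, 1 - sqrt 2],
           vector [1, sqrt 2 / 2, - sqrt 2],
           vector [1, sqrt 2 + 1, - sqrt 2],
           vector [1, sqrt 2 - 1, 2 - 2 * sqrt 2]] ! i"

end

theory Submission
  imports Defs
begin

(* Lines 0, 1, 4 and 5 of L2 are in general position, so a projective transformation moves any
   realization to one in which they are x = 0, y = 0, x = z and y = z.  Normalising each remaining
   line by a nonzero coordinate, the sixteen concurrences of L2 become polynomial equations in the
   normalised coefficients, which force a parameter s with s^2 = 2 and determine every line in
   terms of s.  So each realization is projectively equivalent to L2 (s = sqrt 2) or to its Galois
   conjugate (s = - sqrt 2): the realization space has at most two points, and it contains L2. *)

section \<open>Determinants of triples of lines\<close>

lemma vec3_eq_iff: "(x::real^3) = y \<longleftrightarrow> x$1 = y$1 \<and> x$2 = y$2 \<and> x$3 = y$3"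
  by (simp add: vec_eq_iff forall_3)

definition det3 :: "real^3 \<Rightarrow> real^3 \<Rightarrow> real^3 \<Rightarrow> real" where
  "det3 p q r = det (vector [p, q, r] :: real^3^3)"

lemma det3_expand:
  "det3 p q r = p$1 * (q$2 * r$3 - q$3 * r$2) - p$2 * (q$1 * r$3 - q$3 * r$1)
                + p$3 * (q$1 * r$2 - q$2 * r$1)"
  unfolding det3_def det_3 by (simp add: algebra_simps)

lemma det3_scaleR_left: "det3 (a *\<^sub>R p) q r = a * det3 p q r"
  and det3_scaleR_middle: "det3 p (a *\<^sub>R q) r = a * det3 p q r"
  and det3_scaleR_right: "det3 p q (a *\<^sub>R r) = a * det3 p q r"
  by (simp_all add: det3_expand algebra_simps)

lemmas det3_scaleR = det3_scaleR_left det3_scaleR_middle det3_scaleR_right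

lemma det3_matrix_vector_mult: "det3 (A *v p) (A *v q) (A *v r) = det A * det3 p q r"
proof -
  have "(vector [A *v p, A *v q, A *v r] :: real^3^3) = vector [p, q, r] ** transpose A"
    by (simp add: vec_eq_iff forall_3 matrix_matrix_mult_def matrix_vector_mult_def
        transpose_def sum_3 mult.commute)
  then show ?thesis by (simp add: det3_def det_mul det_transpose)
qed

lemma det3_cramer:
  "det3 p q r *\<^sub>R s = det3 s q r *\<^sub>R p + det3 p s r *\<^sub>R q + det3 p q s *\<^sub>R r"
  by (simp add: vec3_eq_iff det3_expand algebra_simps)

lemma lines_meet_empty_iff_det3: "lines_meet_empty p q r \<longleftrightarrow> det3 p q r \<noteq> 0"
proof -
  define M :: "real^3^3" where "M = vector [p, q, r]"
  have "M *v x = vector [p \<bullet> x, q \<bullet> x, r \<bullet> x]" for x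
    by (simp add: M_def vec_eq_iff forall_3 matrix_vector_mult_def inner_vec_def sum_3)
  then have "lines_meet_empty p q r \<longleftrightarrow> (\<forall>x. M *v x = 0 \<longrightarrow> x = 0)"
    unfolding lines_meet_empty_def by (auto simp: vec_eq_iff forall_3 inner_commute)
  also have "\<dots> \<longleftrightarrow> invertible M"
    by (simp add: invertible_left_inverse matrix_left_invertible_ker)
  also have "\<dots> \<longleftrightarrow> det M \<noteq> 0"
    by (rule invertible_det_nz)
  finally show ?thesis by (simp add: M_def det3_def)
qed

lemma lines_meet_empty_image:
  "lines_meet_empty (v i) (v j) (v k) \<longleftrightarrow> \<not> (\<exists>p. p \<noteq> 0 \<and> (\<forall>x\<in>v ` {i, j, k}. p \<bullet> x = 0))"
  by (auto simp: lines_meet_empty_def)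

section \<open>Matroids and projective equivalence\<close>

lemma arr_matroid_insert_iff:
  assumes "i < n" "j < n" "k < n" "i \<noteq> j" "i \<noteq> k" "j \<noteq> k"
  shows "{i, j, k} \<in> arr_matroid n v \<longleftrightarrow> lines_meet_empty (v i) (v j) (v k)"
proof
  assume "{i, j, k} \<in> arr_matroid n v"
  then obtain i' j' k' where "{i, j, k} = {i', j', k'}" "lines_meet_empty (v i') (v j') (v k')"
    unfolding arr_matroid_def by blast
  then show "lines_meet_empty (v i) (v j) (v k)" by (metis lines_meet_empty_image)
qed (use assms in \<open>auto simp: arr_matroid_def\<close>)

lemma realizations_det3_eq_0_iff:
  assumes "u \<in> realizations (arr_matroid n v) n"
    and "i < n" "j < n" "k < n" "i \<noteq> j" "i \<noteq> k" "j \<noteq> k"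
  shows "det3 (u i) (u j) (u k) = 0 \<longleftrightarrow> det3 (v i) (v j) (v k) = 0"
proof -
  have "arr_matroid n u = arr_matroid n v" using assms(1) by (simp add: realizations_def)
  then show ?thesis
    using arr_matroid_insert_iff[OF assms(2-7), of u] arr_matroid_insert_iff[OF assms(2-7), of v]
    by (simp add: lines_meet_empty_iff_det3)
qed

lemma proj_equiv_rescale:
  assumes "\<forall>i<n. \<exists>c. c \<noteq> 0 \<and> w i = c *\<^sub>R v i"
  shows "proj_equiv n v w"
proof -
  have "invertible (mat 1 :: real^3^3)" unfolding invertible_def by auto
  with assms show ?thesis unfolding proj_equiv_def by (metis matrix_vector_mul_lid)
qed

lemma proj_equiv_sym:
  assumes "proj_equiv n v w"
  shows "proj_equiv n w v"
proof -
  obtain A :: "real^3^3" where "invertible A"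
    and vw: "\<forall>i<n. \<exists>c. c \<noteq> 0 \<and> w i = c *\<^sub>R (A *v v i)"
    using assms unfolding proj_equiv_def by blast
  then obtain B where BA: "B ** A = mat 1" and "invertible B"
    by (metis invertible_def)
  have "\<exists>c. c \<noteq> 0 \<and> v i = c *\<^sub>R (B *v w i)" if "i < n" for i
  proof -
    obtain c where "c \<noteq> 0" "w i = c *\<^sub>R (A *v v i)" using vw \<open>i < n\<close> by blast
    then show ?thesis
      by (intro exI[of _ "inverse c"])
        (simp add: matrix_vector_mult_scaleR matrix_vector_mul_assoc BA)
  qed
  with \<open>invertible B\<close> show ?thesis unfolding proj_equiv_def by blast
qed

lemma proj_equiv_trans:
  assumes "proj_equiv n u v" "proj_equiv n v w"
  shows "proj_equiv n u w"
proof -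
  obtain A :: "real^3^3"
    where A: "invertible A" "\<forall>i<n. \<exists>c. c \<noteq> 0 \<and> v i = c *\<^sub>R (A *v u i)"
    using assms(1) unfolding proj_equiv_def by blast
  obtain B :: "real^3^3"
    where B: "invertible B" "\<forall>i<n. \<exists>c. c \<noteq> 0 \<and> w i = c *\<^sub>R (B *v v i)"
    using assms(2) unfolding proj_equiv_def by blast
  have "\<exists>c. c \<noteq> 0 \<and> w i = c *\<^sub>R ((B ** A) *v u i)" if "i < n" for i
  proof -
    obtain c d where "c \<noteq> 0" "v i = c *\<^sub>R (A *v u i)" "d \<noteq> 0" "w i = d *\<^sub>R (B *v v i)"
      using A(2) B(2) \<open>i < n\<close> by blast
    then show ?thesis
      by (intro exI[of _ "d * c"]) (simp add: matrix_vector_mult_scaleR matrix_vector_mul_assoc)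
  qed
  with invertible_mult[OF B(1) A(1)] show ?thesis unfolding proj_equiv_def by blast
qed

lemma proj_equiv_det3_eq_0_iff:
  assumes "proj_equiv n v w" "i < n" "j < n" "k < n"
  shows "det3 (w i) (w j) (w k) = 0 \<longleftrightarrow> det3 (v i) (v j) (v k) = 0"
proof -
  obtain A :: "real^3^3" where "invertible A"
    and "\<forall>i<n. \<exists>c. c \<noteq> 0 \<and> w i = c *\<^sub>R (A *v v i)"
    using assms(1) unfolding proj_equiv_def by blast
  then obtain c where c: "\<And>i. i < n \<Longrightarrow> c i \<noteq> 0 \<and> w i = c i *\<^sub>R (A *v v i)"
    by metis
  have "det A \<noteq> 0" using \<open>invertible A\<close> by (simp add: invertible_det_nz)
  with c assms(2-4) show ?thesis
    by (simp add: det3_scaleR det3_matrix_vector_mult)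
qed

lemma arr_matroid_proj_equiv:
  assumes "proj_equiv n v w"
  shows "arr_matroid n w = arr_matroid n v"
proof -
  have "(i < n \<and> j < n \<and> k < n \<and> i \<noteq> j \<and> i \<noteq> k \<and> j \<noteq> k \<and> det3 (w i) (w j) (w k) \<noteq> 0) \<longleftrightarrow>
        (i < n \<and> j < n \<and> k < n \<and> i \<noteq> j \<and> i \<noteq> k \<and> j \<noteq> k \<and> det3 (v i) (v j) (v k) \<noteq> 0)"
    for i j k
    using proj_equiv_det3_eq_0_iff[OF assms] by blast
  then show ?thesis unfolding arr_matroid_def lines_meet_empty_iff_det3 by simp
qed

lemma line_arrangement_proj_equiv:
  assumes "proj_equiv n v w" "line_arrangement n v"
  shows "line_arrangement n w"
proof -
  obtain A :: "real^3^3" where "invertible A"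
    and "\<forall>i<n. \<exists>c. c \<noteq> 0 \<and> w i = c *\<^sub>R (A *v v i)"
    using assms(1) unfolding proj_equiv_def by blast
  then obtain c where c: "\<And>i. i < n \<Longrightarrow> c i \<noteq> 0 \<and> w i = c i *\<^sub>R (A *v v i)"
    by metis
  have A: "inj ((*v) A)" using \<open>invertible A\<close> by (rule inj_matrix_vector_mult)
  have "v i = 0" if "i < n" "w i = 0" for i
  proof -
    have "A *v v i = A *v 0" using c[OF \<open>i < n\<close>] \<open>w i = 0\<close> by auto
    then show ?thesis by (rule injD[OF A])
  qed
  moreover have "v j = (t * c i / c j) *\<^sub>R v i" if "i < n" "j < n" "w j = t *\<^sub>R w i" for i j t
  proof -
    have "A *v (c j *\<^sub>R v j) = A *v ((t * c i) *\<^sub>R v i)"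
      using c[OF \<open>i < n\<close>] c[OF \<open>j < n\<close>] \<open>w j = t *\<^sub>R w i\<close> by (simp add: matrix_vector_mult_scaleR)
    then have "c j *\<^sub>R v j = (t * c i) *\<^sub>R v i" by (rule injD[OF A])
    then show ?thesis using c[OF \<open>j < n\<close>] by (metis vector_fraction_eq_iff)
  qed
  ultimately show ?thesis using assms(2) unfolding line_arrangement_def by blast
qed

lemma realizations_proj_equiv:
  assumes "proj_equiv n v w" "v \<in> realizations M n"
  shows "w \<in> realizations M n"
  using assms arr_matroid_proj_equiv line_arrangement_proj_equiv
  unfolding realizations_def by auto

section \<open>Projective frames\<close>

definition general_position4 :: "real^3 \<Rightarrow> real^3 \<Rightarrow> real^3 \<Rightarrow> real^3 \<Rightarrow> bool" where
  "general_position4 p q r s \<longleftrightarrow>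
     det3 p q r \<noteq> 0 \<and> det3 s q r \<noteq> 0 \<and> det3 p s r \<noteq> 0 \<and> det3 p q s \<noteq> 0"

lemma general_position4_standard_frame:
  assumes "general_position4 p q r s"
  obtains C :: "real^3^3" and \<alpha> \<beta> \<gamma> where "invertible C" "\<alpha> \<noteq> 0" "\<beta> \<noteq> 0" "\<gamma> \<noteq> 0"
    "C *v vector [1, 0, 0] = \<alpha> *\<^sub>R p" "C *v vector [0, 1, 0] = \<beta> *\<^sub>R q"
    "C *v vector [0, 0, 1] = \<gamma> *\<^sub>R r" "C *v vector [1, 1, 1] = s"
proof
  define D where "D = det3 p q r"
  define \<alpha> where "\<alpha> = det3 s q r / D"
  define \<beta> where "\<beta> = det3 p s r / D"
  define \<gamma> where "\<gamma> = det3 p q s / D"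
  show "\<alpha> \<noteq> 0" "\<beta> \<noteq> 0" "\<gamma> \<noteq> 0"
    using assms by (simp_all add: general_position4_def \<alpha>_def \<beta>_def \<gamma>_def D_def)
  define C :: "real^3^3" where "C = transpose (vector [\<alpha> *\<^sub>R p, \<beta> *\<^sub>R q, \<gamma> *\<^sub>R r])"
  have C: "C *v x = x$1 *\<^sub>R \<alpha> *\<^sub>R p + x$2 *\<^sub>R \<beta> *\<^sub>R q + x$3 *\<^sub>R \<gamma> *\<^sub>R r" for x
    by (simp add: C_def vec_eq_iff forall_3 matrix_vector_mult_def transpose_def sum_3 algebra_simps)
  show "C *v vector [1, 0, 0] = \<alpha> *\<^sub>R p" "C *v vector [0, 1, 0] = \<beta> *\<^sub>R q"
    "C *v vector [0, 0, 1] = \<gamma> *\<^sub>R r"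
    by (simp_all add: C)
  have "D \<noteq> 0" using assms by (simp add: general_position4_def D_def)
  then have "s = inverse D *\<^sub>R (D *\<^sub>R s)" by simp
  also have "\<dots> = \<alpha> *\<^sub>R p + \<beta> *\<^sub>R q + \<gamma> *\<^sub>R r"
    unfolding D_def det3_cramer[of p q r s]
    by (simp add: \<alpha>_def \<beta>_def \<gamma>_def D_def scaleR_add_right divide_inverse_commute)
  finally show "C *v vector [1, 1, 1] = s" by (simp add: C)
  have "det C = det3 (\<alpha> *\<^sub>R p) (\<beta> *\<^sub>R q) (\<gamma> *\<^sub>R r)"
    by (simp only: C_def det_transpose det3_def)
  also have "\<dots> = \<alpha> * \<beta> * \<gamma> * D"
    by (simp add: det3_scaleR D_def)
  finally show "invertible C"
    using \<open>D \<noteq> 0\<close> \<open>\<alpha> \<noteq> 0\<close> \<open>\<beta> \<noteq> 0\<close> \<open>\<gamma> \<noteq> 0\<close> by (simp add: invertible_det_nz)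
qed

lemma general_position4_proj_map:
  assumes "general_position4 p q r s" "general_position4 p' q' r' s'"
  obtains A :: "real^3^3" where "invertible A"
    "\<exists>k. k \<noteq> 0 \<and> A *v p = k *\<^sub>R p'" "\<exists>k. k \<noteq> 0 \<and> A *v q = k *\<^sub>R q'"
    "\<exists>k. k \<noteq> 0 \<and> A *v r = k *\<^sub>R r'" "A *v s = s'"
proof -
  obtain C :: "real^3^3" and \<alpha> \<beta> \<gamma> where C: "invertible C" "\<alpha> \<noteq> 0" "\<beta> \<noteq> 0" "\<gamma> \<noteq> 0"
    "C *v vector [1, 0, 0] = \<alpha> *\<^sub>R p" "C *v vector [0, 1, 0] = \<beta> *\<^sub>R q"
    "C *v vector [0, 0, 1] = \<gamma> *\<^sub>R r" "C *v vector [1, 1, 1] = s"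
    by (rule general_position4_standard_frame[OF assms(1)])
  obtain C' :: "real^3^3" and \<alpha>' \<beta>' \<gamma>' where C': "invertible C'" "\<alpha>' \<noteq> 0" "\<beta>' \<noteq> 0" "\<gamma>' \<noteq> 0"
    "C' *v vector [1, 0, 0] = \<alpha>' *\<^sub>R p'" "C' *v vector [0, 1, 0] = \<beta>' *\<^sub>R q'"
    "C' *v vector [0, 0, 1] = \<gamma>' *\<^sub>R r'" "C' *v vector [1, 1, 1] = s'"
    by (rule general_position4_standard_frame[OF assms(2)])
  obtain B where BC: "B ** C = mat 1" and "invertible B"
    using \<open>invertible C\<close> by (metis invertible_def)
  define A where "A = C' ** B"
  have "B *v (C *v x) = x" for x
    by (simp add: matrix_vector_mul_assoc BC)
  then have A: "A *v (C *v x) = C' *v x" for x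
    by (simp add: A_def matrix_vector_mul_assoc[symmetric])
  have scaled: "\<exists>k. k \<noteq> 0 \<and> A *v y = k *\<^sub>R y'"
    if "C *v x = a *\<^sub>R y" "C' *v x = a' *\<^sub>R y'" "a \<noteq> 0" "a' \<noteq> 0" for x y y' a a'
  proof -
    have "A *v y = inverse a *\<^sub>R (A *v (C *v x))"
      using that(1,3) by (simp add: matrix_vector_mult_scaleR)
    also have "\<dots> = (a' / a) *\<^sub>R y'"
      using that(2) by (simp add: A divide_inverse mult.commute)
    finally show ?thesis using that by (intro exI[of _ "a' / a"]) simp
  qed
  show ?thesis
  proof
    show "invertible A" unfolding A_def using C'(1) \<open>invertible B\<close> by (rule invertible_mult)
    show "A *v s = s'" using A[of "vector [1, 1, 1]"] C(8) C'(8) by simp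
    show "\<exists>k. k \<noteq> 0 \<and> A *v p = k *\<^sub>R p'" by (rule scaled[OF C(5) C'(5) C(2) C'(2)])
    show "\<exists>k. k \<noteq> 0 \<and> A *v q = k *\<^sub>R q'" by (rule scaled[OF C(6) C'(6) C(3) C'(3)])
    show "\<exists>k. k \<noteq> 0 \<and> A *v r = k *\<^sub>R r'" by (rule scaled[OF C(7) C'(7) C(4) C'(4)])
  qed
qed

section \<open>Rigidity of the arrangement L2\<close>

(* L2_family (sqrt 2) is L2 written with the same coefficients, and L2_family (- sqrt 2) is its
   Galois conjugate. *)
definition L2_family :: "real \<Rightarrow> nat \<Rightarrow> real^3" where
  "L2_family s i = [vector [1, 0, 0],
                    vector [0, 1, 0],
                    vector [1, -1, 0],
                    vector [1, 1, -1],
                    vector [1, 0, -1],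
                    vector [0, 1, -1],
                    vector [1, 0, 1 - s],
                    vector [0, 1, s - 2],
                    vector [1, s, 1 - s],
                    vector [1, s / 2, - s],
                    vector [1, s + 1, - s],
                    vector [1, s - 1, 2 - 2 * s]] ! i"

lemma sqrt2_bounds: "1.41 < sqrt (2::real)" "sqrt (2::real) < 1.42"
proof -
  show "1.41 < sqrt (2::real)" by (rule real_less_rsqrt) (simp add: power2_eq_square)
  have "sqrt (2::real) < sqrt (1.42\<^sup>2)" by (rule real_sqrt_less_mono) (simp add: power2_eq_square)
  then show "sqrt (2::real) < 1.42" by simp
qed

lemma L2_line_arrangement: "line_arrangement 12 L2"
  using sqrt2_bounds
  by (simp add: line_arrangement_def less_Suc_eq numeral_eq_Suc L2_def vec3_eq_iff;
      auto simp: algebra_simps)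

lemma L2_dependent_triples:
  "det3 (L2 0) (L2 1) (L2 2) = 0"  "det3 (L2 2) (L2 4) (L2 5) = 0"
  "det3 (L2 0) (L2 3) (L2 5) = 0"  "det3 (L2 1) (L2 3) (L2 4) = 0"
  "det3 (L2 0) (L2 4) (L2 6) = 0"  "det3 (L2 1) (L2 5) (L2 7) = 0"
  "det3 (L2 3) (L2 6) (L2 7) = 0"  "det3 (L2 0) (L2 7) (L2 10) = 0"
  "det3 (L2 2) (L2 6) (L2 10) = 0" "det3 (L2 1) (L2 6) (L2 8) = 0"
  "det3 (L2 5) (L2 8) (L2 10) = 0" "det3 (L2 5) (L2 6) (L2 11) = 0"
  "det3 (L2 2) (L2 7) (L2 11) = 0" "det3 (L2 4) (L2 7) (L2 9) = 0"
  "det3 (L2 1) (L2 9) (L2 10) = 0" "det3 (L2 4) (L2 8) (L2 11) = 0"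
  by (simp_all add: L2_def det3_expand field_simps)

lemma L2_independent_triples:
  "det3 (L2 0) (L2 1) (L2 6) \<noteq> 0"  "det3 (L2 1) (L2 5) (L2 6) \<noteq> 0"
  "det3 (L2 0) (L2 1) (L2 7) \<noteq> 0"  "det3 (L2 0) (L2 4) (L2 7) \<noteq> 0"
  "det3 (L2 1) (L2 5) (L2 8) \<noteq> 0"  "det3 (L2 1) (L2 5) (L2 9) \<noteq> 0"
  "det3 (L2 0) (L2 1) (L2 10) \<noteq> 0" "det3 (L2 1) (L2 5) (L2 11) \<noteq> 0"
  using sqrt2_bounds by (simp_all add: L2_def det3_expand algebra_simps)

lemma L2_general_position: "general_position4 (L2 0) (L2 1) (L2 4) (L2 5)"
  by (simp add: general_position4_def L2_def det3_expand)

(* In the normal form of L2_frame_realization.normalized_lines below (with f = a and t = b),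
   these are the concurrences {3,6,7}, {2,6,10}, {5,8,10}, {5,6,11}, {2,7,11}, {4,7,9},
   {1,9,10} and {4,8,11}. *)
lemma L2_incidence_system_solution:
  fixes a b c d e g h z :: real
  assumes "a \<noteq> 0" "b \<noteq> 0"
    and ab: "a + b + 1 = 0" and ad: "a * d = b - a" and cd: "a * d - b + c * d = 1"
    and ez: "z = a - e" and bz: "z - b * e = b" and bg: "b * g = h + 1" and dh: "h * d = b"
    and ce: "c * z - a * e + c - e = 0"
  shows "\<exists>s. s\<^sup>2 = 2 \<and> a = 1 - s \<and> b = s - 2 \<and> c = s \<and> d = s - 1 \<and> e = s - 1 \<and>
           z = 2 - 2 * s \<and> g = s / 2 \<and> h = - s"
proof -
  have b_eq: "b = - 1 - a" using ab by simp
  have "a * e = - 1 - 2 * a" using bz unfolding ez b_eq by (simp add: algebra_simps)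
  moreover have "a * d = - 1 - 2 * a" using ad unfolding b_eq by simp
  ultimately have "a * e = a * d" by simp
  then have de: "e = d" using \<open>a \<noteq> 0\<close> by simp
  have cd': "c * d = 1 + a" using ad cd by simp
  have "c * (1 + a) = d - a" using ce cd' ad unfolding ez de b_eq by (simp add: algebra_simps)
  then have "(1 + a)\<^sup>2 = d * (d - a)"
    by (metis cd' mult.assoc mult.commute power2_eq_square)
  then have "a\<^sup>2 = d\<^sup>2" using ad ab by (simp add: algebra_simps power2_eq_square)
  moreover have "a \<noteq> d"
  proof
    assume "a = d"
    then have "(a + 1)\<^sup>2 = 0" using ad ab by (simp add: algebra_simps power2_eq_square)
    then show False using ab \<open>b \<noteq> 0\<close> by simp
  qed
  ultimately have da: "d = - a" by (metis power2_eq_iff)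
  define s where "s = 1 - a"
  have s2: "s\<^sup>2 = 2" using ad ab da by (simp add: s_def algebra_simps power2_eq_square)
  have "s \<noteq> 1" "s \<noteq> 2" using s2 by auto
  have "(c - s) * (s - 1) = 0" using cd' da s2 by (simp add: s_def algebra_simps power2_eq_square)
  with \<open>s \<noteq> 1\<close> have c: "c = s" by simp
  have "(h + s) * (s - 1) = 0" using dh da ab s2 by (simp add: s_def algebra_simps power2_eq_square)
  with \<open>s \<noteq> 1\<close> have h: "h = - s" by simp
  have "(2 * g - s) * (s - 2) = 0" using bg h b_eq s2 by (simp add: s_def algebra_simps power2_eq_square)
  with \<open>s \<noteq> 2\<close> have "g = s / 2" by simp
  then show ?thesis using s2 c h b_eq da de ez by (intro exI[of _ s]) (simp add: s_def)
qed

locale L2_frame_realization =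
  fixes u :: "nat \<Rightarrow> real^3"
  assumes realization: "u \<in> realizations (arr_matroid 12 L2) 12"
    and frame: "u 0 = vector [1, 0, 0]" "u 1 = vector [0, 1, 0]"
      "u 4 = vector [1, 0, -1]" "u 5 = vector [0, 1, -1]"
begin

lemma det3_eq_0_iff:
  assumes "i < 12" "j < 12" "k < 12" "i \<noteq> j" "i \<noteq> k" "j \<noteq> k"
  shows "det3 (u i) (u j) (u k) = 0 \<longleftrightarrow> det3 (L2 i) (L2 j) (L2 k) = 0"
  using realizations_det3_eq_0_iff[OF realization assms] .

lemma dependent_triples:
  "det3 (u 0) (u 1) (u 2) = 0"  "det3 (u 2) (u 4) (u 5) = 0"
  "det3 (u 0) (u 3) (u 5) = 0"  "det3 (u 1) (u 3) (u 4) = 0"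
  "det3 (u 0) (u 4) (u 6) = 0"  "det3 (u 1) (u 5) (u 7) = 0"
  "det3 (u 3) (u 6) (u 7) = 0"  "det3 (u 0) (u 7) (u 10) = 0"
  "det3 (u 2) (u 6) (u 10) = 0" "det3 (u 1) (u 6) (u 8) = 0"
  "det3 (u 5) (u 8) (u 10) = 0" "det3 (u 5) (u 6) (u 11) = 0"
  "det3 (u 2) (u 7) (u 11) = 0" "det3 (u 4) (u 7) (u 9) = 0"
  "det3 (u 1) (u 9) (u 10) = 0" "det3 (u 4) (u 8) (u 11) = 0"
  by (subst det3_eq_0_iff; (rule L2_dependent_triples | simp))+

lemma independent_triples:
  "det3 (u 0) (u 1) (u 6) \<noteq> 0"  "det3 (u 1) (u 5) (u 6) \<noteq> 0"
  "det3 (u 0) (u 1) (u 7) \<noteq> 0"  "det3 (u 0) (u 4) (u 7) \<noteq> 0"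
  "det3 (u 1) (u 5) (u 8) \<noteq> 0"  "det3 (u 1) (u 5) (u 9) \<noteq> 0"
  "det3 (u 0) (u 1) (u 10) \<noteq> 0" "det3 (u 1) (u 5) (u 11) \<noteq> 0"
  by (subst det3_eq_0_iff; (rule L2_independent_triples | simp))+

lemma normalized_lines:
  obtains k2 k3 k6 k7 k8 k9 k10 k11 a b c f d t g h e z :: real
  where "k2 \<noteq> 0" "k3 \<noteq> 0" "k6 \<noteq> 0" "k7 \<noteq> 0" "k8 \<noteq> 0" "k9 \<noteq> 0" "k10 \<noteq> 0" "k11 \<noteq> 0"
    and "a \<noteq> 0" "b \<noteq> 0"
    and "u 2 = k2 *\<^sub>R vector [1, -1, 0]" "u 3 = k3 *\<^sub>R vector [1, 1, -1]"
      "u 6 = k6 *\<^sub>R vector [1, 0, a]" "u 7 = k7 *\<^sub>R vector [0, 1, b]"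
      "u 8 = k8 *\<^sub>R vector [1, c, f]" "u 9 = k9 *\<^sub>R vector [1, g, h]"
      "u 10 = k10 *\<^sub>R vector [d, 1, t]" "u 11 = k11 *\<^sub>R vector [1, e, z]"
proof -
  have nonzero: "u i \<noteq> 0" if "i < 12" for i
    using realization that by (simp add: realizations_def line_arrangement_def)
  have frame_coords: "u 2 $ 3 = 0" "u 2 $ 2 = - u 2 $ 1" "u 3 $ 2 = u 3 $ 1" "u 3 $ 3 = - u 3 $ 1"
    "u 6 $ 2 = 0" "u 7 $ 1 = 0"
    using dependent_triples(1-6)[unfolded frame det3_expand] by simp_all
  have coords_nonzero: "u 6 $ 3 \<noteq> 0" "u 6 $ 1 \<noteq> 0" "u 7 $ 3 \<noteq> 0" "u 7 $ 2 \<noteq> 0"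
    "u 8 $ 1 \<noteq> 0" "u 9 $ 1 \<noteq> 0" "u 10 $ 3 \<noteq> 0" "u 11 $ 1 \<noteq> 0"
    using independent_triples[unfolded frame det3_expand] by simp_all
  define k2 k3 k6 k7 k8 k9 k10 k11 where scalars: "k2 = u 2 $ 1" "k3 = u 3 $ 1" "k6 = u 6 $ 1"
    "k7 = u 7 $ 2" "k8 = u 8 $ 1" "k9 = u 9 $ 1" "k10 = u 10 $ 2" "k11 = u 11 $ 1"
  have scalars_nonzero:
    "k2 \<noteq> 0" "k3 \<noteq> 0" "k6 \<noteq> 0" "k7 \<noteq> 0" "k8 \<noteq> 0" "k9 \<noteq> 0" "k10 \<noteq> 0" "k11 \<noteq> 0"
    using nonzero[of 2] nonzero[of 3] frame_coords coords_nonzero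
      dependent_triples(8)[unfolded frame det3_expand]
    by (auto simp: scalars vec3_eq_iff)
  define a b c f d t g h e z where params: "a = u 6 $ 3 / k6" "b = u 7 $ 3 / k7"
    "c = u 8 $ 2 / k8" "f = u 8 $ 3 / k8" "d = u 10 $ 1 / k10" "t = u 10 $ 3 / k10"
    "g = u 9 $ 2 / k9" "h = u 9 $ 3 / k9" "e = u 11 $ 2 / k11" "z = u 11 $ 3 / k11"
  have "a \<noteq> 0" "b \<noteq> 0" using coords_nonzero scalars_nonzero by (simp_all add: params scalars)
  moreover have lines:
    "u 2 = k2 *\<^sub>R vector [1, -1, 0]" "u 3 = k3 *\<^sub>R vector [1, 1, -1]"
    "u 6 = k6 *\<^sub>R vector [1, 0, a]" "u 7 = k7 *\<^sub>R vector [0, 1, b]"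
    "u 8 = k8 *\<^sub>R vector [1, c, f]" "u 9 = k9 *\<^sub>R vector [1, g, h]"
    "u 10 = k10 *\<^sub>R vector [d, 1, t]" "u 11 = k11 *\<^sub>R vector [1, e, z]"
    using frame_coords scalars_nonzero by (simp_all add: vec3_eq_iff params scalars)
  ultimately show thesis using that[OF scalars_nonzero] by blast
qed

lemma L2_family_normal_form: "\<exists>s. s\<^sup>2 = 2 \<and> (\<forall>i<12. \<exists>k. u i = k *\<^sub>R L2_family s i)"
proof -
  obtain k2 k3 k6 k7 k8 k9 k10 k11 a b c f d t g h e z :: real
    where scalars_nonzero:
      "k2 \<noteq> 0" "k3 \<noteq> 0" "k6 \<noteq> 0" "k7 \<noteq> 0" "k8 \<noteq> 0" "k9 \<noteq> 0" "k10 \<noteq> 0" "k11 \<noteq> 0"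
    and "a \<noteq> 0" "b \<noteq> 0"
    and lines: "u 2 = k2 *\<^sub>R vector [1, -1, 0]" "u 3 = k3 *\<^sub>R vector [1, 1, -1]"
      "u 6 = k6 *\<^sub>R vector [1, 0, a]" "u 7 = k7 *\<^sub>R vector [0, 1, b]"
      "u 8 = k8 *\<^sub>R vector [1, c, f]" "u 9 = k9 *\<^sub>R vector [1, g, h]"
      "u 10 = k10 *\<^sub>R vector [d, 1, t]" "u 11 = k11 *\<^sub>R vector [1, e, z]"
    by (rule normalized_lines)
  note incidences = dependent_triples(7-16)[unfolded lines frame det3_scaleR mult_eq_0_iff,
      simplified scalars_nonzero simp_thms, unfolded det3_expand, simplified]
  have ft: "f = a" "t = b" using incidences by simp_all
  have "a + b + 1 = 0" "a * d = b - a" "a * d - b + c * d = 1" "z = a - e" "z - b * e = b"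
    "b * g = h + 1" "h * d = b" "c * z - a * e + c - e = 0"
    using incidences by simp_all
  then obtain s where s2: "s\<^sup>2 = 2" and params: "a = 1 - s" "b = s - 2" "c = s"
    "d = s - 1" "e = s - 1" "z = 2 - 2 * s" "g = s / 2" "h = - s"
    using L2_incidence_system_solution \<open>a \<noteq> 0\<close> \<open>b \<noteq> 0\<close> by blast
  have "(s - 1) * (s + 1) = 1" using s2 by (simp add: algebra_simps power2_eq_square)
  then have "u 10 = (k10 * (s - 1)) *\<^sub>R L2_family s 10"
    using lines(7) ft params s2
    by (simp add: L2_family_def vec3_eq_iff algebra_simps power2_eq_square)
  then have scaled:
    "u i = [1, 1, k2, k3, 1, 1, k6, k7, k8, k9, k10 * (s - 1), k11] ! i *\<^sub>R L2_family s i"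
    if "i \<in> {0, 1, 2, 3, 4, 5, 6, 7, 8, 9, 10, 11}" for i
    using that ft
    by (auto simp: L2_family_def frame frame(2)[unfolded One_nat_def] lines params)
  have indices: "i \<in> {0, 1, 2, 3, 4, 5, 6, 7, 8, 9, 10, 11}" if "i < 12" for i :: nat
    using that by (simp add: less_Suc_eq numeral_eq_Suc)
  have "\<exists>k. u i = k *\<^sub>R L2_family s i" if "i < 12" for i
    using scaled[OF indices[OF that]] by (rule exI)
  with s2 show ?thesis by blast
qed

end

lemma L2_realization_proj_equiv_L2_family:
  assumes v: "v \<in> realizations (arr_matroid 12 L2) 12"
  shows "\<exists>s \<in> {sqrt 2, - sqrt 2}. proj_equiv 12 v (L2_family s)"
proof -
  have "general_position4 (v 0) (v 1) (v 4) (v 5)"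
    using L2_general_position realizations_det3_eq_0_iff[OF v]
    by (simp add: general_position4_def)
  then obtain A :: "real^3^3" where "invertible A" "\<exists>k. k \<noteq> 0 \<and> A *v v 0 = k *\<^sub>R L2 0"
    "\<exists>k. k \<noteq> 0 \<and> A *v v 1 = k *\<^sub>R L2 1" "\<exists>k. k \<noteq> 0 \<and> A *v v 4 = k *\<^sub>R L2 4" "A *v v 5 = L2 5"
    using L2_general_position by (rule general_position4_proj_map)
  then obtain k0 k1 k4 where k: "k0 \<noteq> 0" "k1 \<noteq> 0" "k4 \<noteq> 0" "A *v v 0 = k0 *\<^sub>R L2 0"
    "A *v v 1 = k1 *\<^sub>R L2 1" "A *v v 4 = k4 *\<^sub>R L2 4"
    by blast
  define c :: "nat \<Rightarrow> real" where
    "c i = (if i = 0 then inverse k0 else if i = 1 then inverse k1 else if i = 4 then inverse k4 else 1)"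
    for i
  define u where "u i = c i *\<^sub>R (A *v v i)" for i
  have "c i \<noteq> 0" for i using k(1-3) by (simp add: c_def)
  then have "proj_equiv 12 v u"
    unfolding proj_equiv_def u_def using \<open>invertible A\<close> by blast
  then have u: "u \<in> realizations (arr_matroid 12 L2) 12" using v by (rule realizations_proj_equiv)
  have "L2_frame_realization u"
    by unfold_locales (use u k \<open>A *v v 5 = L2 5\<close> in \<open>simp_all add: u_def c_def L2_def\<close>)
  then obtain s where "s\<^sup>2 = 2" and "\<forall>i<12. \<exists>k. u i = k *\<^sub>R L2_family s i"
    using L2_frame_realization.L2_family_normal_form by blast
  moreover have "u i \<noteq> 0" if "i < 12" for i
    using u that by (simp add: realizations_def line_arrangement_def)
  ultimately have "\<forall>i<12. \<exists>k. k \<noteq> 0 \<and> u i = k *\<^sub>R L2_family s i" by fastforce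
  then have "proj_equiv 12 (L2_family s) u" by (rule proj_equiv_rescale)
  then have "proj_equiv 12 v (L2_family s)"
    using \<open>proj_equiv 12 v u\<close> proj_equiv_sym proj_equiv_trans by blast
  moreover have "s \<in> {sqrt 2, - sqrt 2}"
    using \<open>s\<^sup>2 = 2\<close> real_sqrt_abs[of s] by (auto simp: abs_if split: if_splits)
  ultimately show ?thesis by blast
qed

theorem proposition4p5:
  shows "finite (realization_space (arr_matroid 12 L2) 12) \<and>
         realization_space (arr_matroid 12 L2) 12 \<noteq> {}"
proof
  let ?R = "realizations (arr_matroid 12 L2) 12"
  let ?orbit = "\<lambda>v. {w \<in> ?R. proj_equiv 12 v w}"
  have "realization_space (arr_matroid 12 L2) 12 \<subseteq> ?orbit ` L2_family ` {sqrt 2, - sqrt 2}"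
  proof
    fix X assume "X \<in> realization_space (arr_matroid 12 L2) 12"
    then obtain v where "v \<in> ?R" and X: "X = ?orbit v" unfolding realization_space_def by blast
    then obtain s where s: "s \<in> {sqrt 2, - sqrt 2}" and "proj_equiv 12 v (L2_family s)"
      using L2_realization_proj_equiv_L2_family by blast
    then have "X = ?orbit (L2_family s)" using X proj_equiv_sym proj_equiv_trans by blast
    with s show "X \<in> ?orbit ` L2_family ` {sqrt 2, - sqrt 2}" by blast
  qed
  then show "finite (realization_space (arr_matroid 12 L2) 12)" by (rule finite_subset) simp
next
  have "L2 \<in> realizations (arr_matroid 12 L2) 12"
    using L2_line_arrangement by (simp add: realizations_def)
  then show "realization_space (arr_matroid 12 L2) 12 \<noteq> {}"
    unfolding realization_space_def by blast
qed

end
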